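(* Let $C>0$, $p\in(0,1]$ and $\epsilon\in(0,1)$, and let $$\tau(\epsilon) := 1+\ln(1/\epsilon)+\sqrt{\ln^2(1/\epsilon)+2\ln(1/\epsilon)}.$$ Let $S$ be a finite set of elements, each $i\in S$ having a weight $w_i$ with $0\le w_i\le C$, such that $$\sum_{i\in S} w_i \ \ge\ \frac{\tau(\epsilon)}{p}\cdot C.$$ Suppose each element of $S$ is active independently with probability $p$. Then, with probability at least $1-\epsilon$, the total weight of the active elements of $S$ is at least $C$.
   Context: This is used in a knapsack setting with capacity $C$, where it is a standing assumption of the paper that every individual item fits in the knapsack, i.e. $w_i\le C$ for every item. *)

theory Defs
  imports "HOL-Probability.Probability"
begin

definition tau :: "real \<Rightarrow> real" where
  "tau \<epsilon> = 1 + ln (1 / \<epsilon>) + sqrt ((ln (1 / \<epsilon>))\<^sup>2 + 2 * ln (1 / \<epsilon>))"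

definition active_pmf :: "'a set \<Rightarrow> real \<Rightarrow> ('a \<Rightarrow> bool) pmf" where
  "active_pmf S p = Pi_pmf S False (\<lambda>_. bernoulli_pmf p)"

end

theory Submission
  imports Defs
begin

text \<open>
  Normalise the weights to \<open>x i = w i / C \<in> [0, 1]\<close>, so that the expected normalised active
  weight \<open>\<mu> = p * (\<Sum>i\<in>S. x i)\<close> is at least \<open>tau \<epsilon>\<close>. The Chernoff bound for the lower tail at
  threshold \<open>1\<close> bounds the failure probability by \<open>\<mu> * exp (1 - \<mu>)\<close>. Since \<open>tau \<epsilon>\<close> is the
  larger root of \<open>(m - 1)\<^sup>2 = 2 * m * ln (1 / \<epsilon>)\<close>, the estimate \<open>ln m \<le> (m - 1 / m) / 2\<close>
  gives \<open>m * exp (1 - m) \<le> \<epsilon>\<close> for every \<open>m \<ge> tau \<epsilon>\<close>.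
\<close>

lemma ln_le_half_diff_inverse:
  fixes m :: real
  assumes "1 \<le> m"
  shows "ln m \<le> (m - 1 / m) / 2"
proof -
  let ?f = "\<lambda>x::real. (x - 1 / x) / 2 - ln x"
  have "?f 1 \<le> ?f m"
  proof (rule DERIV_nonneg_imp_nondecreasing[OF assms])
    fix x :: real
    assume x: "1 \<le> x" "x \<le> m"
    have "(?f has_real_derivative (x - 1)\<^sup>2 / (2 * x\<^sup>2)) (at x)"
      using x by (auto intro!: derivative_eq_intros simp: field_simps power2_eq_square)
    then show "\<exists>y. (?f has_real_derivative y) (at x) \<and> 0 \<le> y"
      by (intro exI[of _ "(x - 1)\<^sup>2 / (2 * x\<^sup>2)"]) simp
  qed
  then show ?thesis
    by simp
qed

lemma one_le_tau:
  assumes "0 < \<epsilon>" "\<epsilon> \<le> 1"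
  shows "1 \<le> tau \<epsilon>"
  using assms by (simp add: tau_def)

lemma mult_exp_one_minus_le_if_tau_le:
  fixes m \<epsilon> :: real
  assumes "0 < \<epsilon>" "\<epsilon> \<le> 1" "tau \<epsilon> \<le> m"
  shows "m * exp (1 - m) \<le> \<epsilon>"
proof -
  define L where "L = ln (1 / \<epsilon>)"
  have "0 \<le> L"
    using assms(1,2) by (simp add: L_def)
  have m: "1 \<le> m"
    using one_le_tau[OF assms(1,2)] assms(3) by linarith
  have root: "sqrt (L\<^sup>2 + 2 * L) \<le> m - 1 - L"
    using assms(3) by (simp add: tau_def L_def)
  have "L\<^sup>2 + 2 * L \<le> (m - 1 - L)\<^sup>2"
    using power_mono[OF root, of 2] \<open>0 \<le> L\<close> by simp
  then have "L \<le> (m - 1)\<^sup>2 / (2 * m)"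
    using m by (simp add: field_simps power2_eq_square)
  moreover have "(m - 1 / m) / 2 - (m - 1) = - ((m - 1)\<^sup>2 / (2 * m))"
    using m by (simp add: field_simps power2_eq_square)
  ultimately have "ln m + 1 - m \<le> - L"
    using ln_le_half_diff_inverse[OF m] by linarith
  then have "exp (ln m + 1 - m) \<le> exp (- L)"
    by simp
  moreover have "exp (ln m + 1 - m) = m * exp (1 - m)"
    using m by (simp add: exp_add exp_diff)
  moreover have "exp (- L) = \<epsilon>"
    using assms(1) by (simp add: L_def ln_div)
  ultimately show ?thesis
    by simp
qed

lemma expectation_bernoulli_exp_neg_le:
  fixes q x t :: real
  assumes "0 \<le> q" "q \<le> 1" "0 \<le> x" "x \<le> 1"
  shows "measure_pmf.expectation (bernoulli_pmf q) (\<lambda>b. exp (- t * (if b then x else 0)))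
           \<le> exp (- (q * x * (1 - exp (- t))))"
proof -
  have "exp (- t * x) \<le> (1 - x) + x * exp (- t)"
    using convex_onD[OF exp_convex, of x 0 "-t"] assms(3,4) by (simp add: algebra_simps)
  then have "q * exp (- t * x) + (1 - q) \<le> q * ((1 - x) + x * exp (- t)) + (1 - q)"
    using assms(1) by (simp add: mult_left_mono)
  also have "\<dots> = 1 + - (q * x * (1 - exp (- t)))"
    by (simp add: algebra_simps)
  also have "\<dots> \<le> exp (- (q * x * (1 - exp (- t))))"
    by (rule exp_ge_add_one_self)
  finally show ?thesis
    using assms(1,2) by (simp add: mult.commute)
qed

lemma expectation_Pi_bernoulli_exp_neg_le:
  fixes S :: "'a set" and q x :: "'a \<Rightarrow> real" and t :: real
  assumes "finite S"
    and q: "\<And>i. i \<in> S \<Longrightarrow> 0 \<le> q i \<and> q i \<le> 1"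
    and x: "\<And>i. i \<in> S \<Longrightarrow> 0 \<le> x i \<and> x i \<le> 1"
  shows "measure_pmf.expectation (Pi_pmf S False (\<lambda>i. bernoulli_pmf (q i)))
           (\<lambda>A. exp (- t * (\<Sum>i\<in>{i\<in>S. A i}. x i)))
         \<le> exp (- ((\<Sum>i\<in>S. q i * x i) * (1 - exp (- t))))"
proof -
  let ?g = "\<lambda>i b. exp (- t * (if b then x i else 0))"
  have "exp (- t * (\<Sum>i\<in>{i\<in>S. A i}. x i)) = (\<Prod>i\<in>S. ?g i (A i))" for A :: "'a \<Rightarrow> bool"
    using assms(1)
    by (simp add: sum.inter_filter sum_distrib_left exp_sum if_distrib cong: if_cong)
  then have "measure_pmf.expectation (Pi_pmf S False (\<lambda>i. bernoulli_pmf (q i)))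
               (\<lambda>A. exp (- t * (\<Sum>i\<in>{i\<in>S. A i}. x i)))
             = measure_pmf.expectation (Pi_pmf S False (\<lambda>i. bernoulli_pmf (q i)))
               (\<lambda>A. \<Prod>i\<in>S. ?g i (A i))"
    by simp
  also have "\<dots> = (\<Prod>i\<in>S. measure_pmf.expectation (bernoulli_pmf (q i)) (?g i))"
    by (rule expectation_prod_Pi_pmf[OF assms(1)]) (auto intro: integrable_measure_pmf_finite)
  also have "\<dots> \<le> (\<Prod>i\<in>S. exp (- (q i * x i * (1 - exp (- t)))))"
    using q x by (intro prod_mono conjI integral_nonneg_AE expectation_bernoulli_exp_neg_le) auto
  also have "\<dots> = exp (- ((\<Sum>i\<in>S. q i * x i) * (1 - exp (- t))))"
    using assms(1) by (simp add: exp_sum[symmetric] sum_negf sum_distrib_right)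
  finally show ?thesis .
qed

lemma Chernoff_lower_tail_Pi_bernoulli:
  fixes S :: "'a set" and q x :: "'a \<Rightarrow> real" and a :: real
  defines "\<mu> \<equiv> \<Sum>i\<in>S. q i * x i"
  assumes "finite S"
    and q: "\<And>i. i \<in> S \<Longrightarrow> 0 \<le> q i \<and> q i \<le> 1"
    and x: "\<And>i. i \<in> S \<Longrightarrow> 0 \<le> x i \<and> x i \<le> 1"
    and "0 < a" "a \<le> \<mu>"
  shows "measure_pmf.prob (Pi_pmf S False (\<lambda>i. bernoulli_pmf (q i)))
           {A. (\<Sum>i\<in>{i\<in>S. A i}. x i) < a} \<le> (\<mu> / a) powr a * exp (a - \<mu>)"
proof -
  let ?M = "Pi_pmf S False (\<lambda>i. bernoulli_pmf (q i))"
  let ?X = "\<lambda>A. \<Sum>i\<in>{i\<in>S. A i}. x i"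
  \<comment> \<open>the exponent minimising the Markov bound below\<close>
  define t where "t = ln (\<mu> / a)"
  have "0 < \<mu>"
    using assms(5,6) by linarith
  have "0 \<le> t"
    using assms(5,6) by (simp add: t_def)
  have "finite (set_pmf ?M)"
    using assms(2) by (subst set_Pi_pmf) auto
  then have int: "integrable ?M f" for f :: "('a \<Rightarrow> bool) \<Rightarrow> real"
    by (rule integrable_measure_pmf_finite)
  have "measure_pmf.prob ?M {A. ?X A < a} = measure_pmf.expectation ?M (indicator {A. ?X A < a})"
    by simp
  also have "\<dots> \<le> measure_pmf.expectation ?M (\<lambda>A. exp (t * a) * exp (- t * ?X A))"
  proof (rule integral_mono[OF int int])
    fix A :: "'a \<Rightarrow> bool"
    have "?X A < a \<Longrightarrow> 0 \<le> t * (a - ?X A)"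
      using \<open>0 \<le> t\<close> by simp
    then show "indicator {A. ?X A < a} A \<le> exp (t * a) * exp (- t * ?X A)"
      by (auto simp: indicator_def exp_add[symmetric] algebra_simps)
  qed
  also have "\<dots> = exp (t * a) * measure_pmf.expectation ?M (\<lambda>A. exp (- t * ?X A))"
    by simp
  also have "\<dots> \<le> exp (t * a) * exp (- (\<mu> * (1 - exp (- t))))"
    unfolding \<mu>_def using assms(2) q x
    by (intro mult_left_mono expectation_Pi_bernoulli_exp_neg_le) auto
  also have "\<dots> = (\<mu> / a) powr a * exp (a - \<mu>)"
  proof -
    have "exp (t * a) = (\<mu> / a) powr a"
      using \<open>0 < \<mu>\<close> assms(5) by (simp add: t_def powr_def mult.commute)
    moreover have "\<mu> * (1 - exp (- t)) = \<mu> - a"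
      using \<open>0 < \<mu>\<close> assms(5) by (simp add: t_def exp_minus field_simps)
    ultimately show ?thesis
      by simp
  qed
  finally show ?thesis .
qed

theorem lemma1:
  fixes S :: "'a set" and w :: "'a \<Rightarrow> real" and C p \<epsilon> :: real
  assumes "C > 0" and "0 < p" and "p \<le> 1" and "0 < \<epsilon>" and "\<epsilon> < 1"
    and "finite S"
    and "\<And>i. i \<in> S \<Longrightarrow> 0 \<le> w i \<and> w i \<le> C"
    and "(\<Sum>i\<in>S. w i) \<ge> tau \<epsilon> / p * C"
  shows "measure_pmf.prob (active_pmf S p)
           {A. (\<Sum>i\<in>{i\<in>S. A i}. w i) \<ge> C} \<ge> 1 - \<epsilon>"
proof -
  define x where "x i = w i / C" for i
  define \<mu> where "\<mu> = (\<Sum>i\<in>S. p * x i)"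
  let ?X = "\<lambda>A. \<Sum>i\<in>{i\<in>S. A i}. x i"
  have x: "0 \<le> x i \<and> x i \<le> 1" if "i \<in> S" for i
    using assms(1) assms(7)[OF that] by (simp add: x_def)
  have "tau \<epsilon> \<le> \<mu>"
    using assms(1,2,8)
    by (simp add: \<mu>_def x_def sum_distrib_left[symmetric] sum_divide_distrib[symmetric] field_simps)
  then have "1 \<le> \<mu>"
    using one_le_tau[OF assms(4)] assms(5) by linarith
  have "measure_pmf.prob (active_pmf S p) {A. ?X A < 1} \<le> \<mu> * exp (1 - \<mu>)"
    using Chernoff_lower_tail_Pi_bernoulli[of S "\<lambda>_. p" x 1] assms(2,3,6) x \<open>1 \<le> \<mu>\<close>
    by (simp add: active_pmf_def \<mu>_def)
  also have "\<dots> \<le> \<epsilon>"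
    using mult_exp_one_minus_le_if_tau_le assms(4,5) \<open>tau \<epsilon> \<le> \<mu>\<close> by simp
  finally have "measure_pmf.prob (active_pmf S p) {A. ?X A < 1} \<le> \<epsilon>" .
  moreover have "{A. C \<le> (\<Sum>i\<in>{i\<in>S. A i}. w i)} = UNIV - {A. ?X A < 1}"
    using assms(1) by (auto simp: x_def sum_divide_distrib[symmetric])
  ultimately show ?thesis
    using measure_pmf.prob_compl[of "{A. ?X A < 1}" "active_pmf S p"] by simp
qed

end
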